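(* Let $\boldsymbol{W}=(w_{ir})\in\mathbb{R}^{n\times n}$ be nonnegative, primitive and doubly stochastic, with $\lambda:=\|\boldsymbol{W}-\mathbf{1}_n\mathbf{1}_n^\top/n\|_2<1$. For any realization of the iterates of GT-NSGDm (described in the context) with step size $\alpha>0$, and $\bar{\boldsymbol{x}}^t=\frac1n\sum_i\boldsymbol{x}_i^t$, we have for all $t=0,\dots,T$: $$\frac1n\sum_{i=1}^n\|\boldsymbol{x}_i^t-\bar{\boldsymbol{x}}^t\|\le\frac{\alpha\lambda}{1-\lambda}.$$
   Context: Algorithm GT-NSGDm (run in parallel at every node $i$, with local functions $f_i$ and stochastic gradients $\boldsymbol{g}_i(\boldsymbol{x},\boldsymbol{\xi})$): initialize $\boldsymbol{x}_i^{-1}=\boldsymbol{x}_i^0=\bar{\boldsymbol{x}}^0$ (a common point) and $\boldsymbol{v}_i^{-1}=\boldsymbol{y}_i^{-1}=\mathbf{0}_d$. For $t=0,\dots,T-1$: sample $\boldsymbol{\xi}_i^t$; set $\boldsymbol{v}_i^t=\beta\boldsymbol{v}_i^{t-1}+(1-\beta)\boldsymbol{g}_i(\boldsymbol{x}_i^t,\boldsymbol{\xi}_i^t)$; $\boldsymbol{y}_i^t=\sum_{r=1}^n w_{ir}(\boldsymbol{y}_r^{t-1}+\boldsymbol{v}_r^t-\boldsymbol{v}_r^{t-1})$; $\boldsymbol{x}_i^{t+1}=\sum_{r=1}^n w_{ir}\big(\boldsymbol{x}_r^t-\alpha\,\boldsymbol{y}_r^t/\|\boldsymbol{y}_r^t\|\big)$.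 *)

theory Defs
  imports "HOL-Analysis.Analysis"
begin

(* Matrices over a finite index type 'n (the n nodes), n = CARD('n). *)

fun mat_pow :: "real^'n^'n \<Rightarrow> nat \<Rightarrow> real^'n^'n" where
  "mat_pow W 0 = mat 1"
| "mat_pow W (Suc k) = W ** mat_pow W k"

definition nonneg_matrix :: "real^'n^'n \<Rightarrow> bool" where
  "nonneg_matrix W \<longleftrightarrow> (\<forall>i j. 0 \<le> W $ i $ j)"

definition primitive_matrix :: "real^'n^'n \<Rightarrow> bool" where
  "primitive_matrix W \<longleftrightarrow> (\<exists>k. \<forall>i j. 0 < mat_pow W k $ i $ j)"

definition doubly_stochastic :: "real^'n^'n \<Rightarrow> bool" where
  "doubly_stochastic W \<longleftrightarrow>
     (\<forall>i j. 0 \<le> W $ i $ j) \<and> (\<forall>i. (\<Sum>j\<in>UNIV. W $ i $ j) = 1) \<and> (\<forall>j. (\<Sum>i\<in>UNIV. W $ i $ j) = 1)"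

definition avg_matrix :: "real^'n^'n" where
  "avg_matrix = (\<chi> i j. 1 / real CARD('n))"

(* spectral norm ||W - 1 1^T/n||_2 = operator norm w.r.t. the Euclidean norm *)
definition mixing_rate :: "real^'n^'n \<Rightarrow> real" where
  "mixing_rate W = onorm (\<lambda>z. (W - avg_matrix) *v z)"

(* normalized vector y/||y|| (convention: 0 when y = 0, since inverse 0 = 0) *)
definition normalize :: "real^'d \<Rightarrow> real^'d" where
  "normalize y = (1 / norm y) *\<^sub>R y"

end

theory Submission
  imports Defs
begin

text \<open>
  Stack the iterates of the n nodes into one vector and let J = 1 1^T / n. Since W is doubly
  stochastic, the consensus error e^t = x^t - J x^t obeys e^(t+1) = (W - J)(e^t - alpha d^t),
  where d^t stacks the normalized directions y_i^t / |y_i^t|. Each of these has norm at most 1,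
  so |d^t| <= sqrt n in the stacked (Frobenius) norm, and therefore
  |e^(t+1)| <= lambda |e^t| + alpha lambda sqrt n. As e^0 = 0, this affine recursion keeps
  |e^t| below its fixed point alpha lambda sqrt n / (1 - lambda), and Cauchy-Schwarz turns
  this into the bound on the mean error. Nothing else is used about the directions.
\<close>

text \<open>\<open>mix W u\<close> is the gossip step \<open>(W \<otimes> I) u\<close> on stacked node vectors \<open>u\<close>.\<close>

definition mix :: "real^'n^'m \<Rightarrow> 'a^'n \<Rightarrow> 'a::real_vector^'m" where
  "mix M u = (\<chi> i. \<Sum>r\<in>UNIV. M $ i $ r *\<^sub>R u $ r)"

definition average :: "'a::real_vector^'n \<Rightarrow> 'a" where
  "average u = (1 / real CARD('n)) *\<^sub>R (\<Sum>j\<in>UNIV. u $ j)"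

definition deviation :: "'a::real_vector^'n \<Rightarrow> 'a^'n" where
  "deviation u = u - (\<chi> i. average u)"

lemma power2_norm_vec: "(norm u)\<^sup>2 = (\<Sum>i\<in>UNIV. (norm (u $ i))\<^sup>2)"
  by (simp add: norm_vec_def L2_set_def sum_nonneg)

lemma power2_norm_euclidean:
  fixes x :: "'a::euclidean_space"
  shows "(norm x)\<^sup>2 = (\<Sum>b\<in>Basis. (x \<bullet> b)\<^sup>2)"
  unfolding power2_norm_eq_inner by (subst euclidean_inner) (simp add: power2_eq_square)

lemma norm_mix_le:
  fixes M :: "real^'n^'m" and u :: "'a::euclidean_space^'n"
  shows "norm (mix M u) \<le> onorm (\<lambda>z. M *v z) * norm u"
proof -
  define L where "L = onorm (\<lambda>z. M *v z)"
  define c where "c b = (\<chi> r. u $ r \<bullet> b)" for b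
  have comp: "mix M u $ i \<bullet> b = (M *v c b) $ i" for i b
    by (simp add: mix_def matrix_vector_mult_def c_def inner_sum_left)
  have "(norm (mix M u))\<^sup>2 = (\<Sum>i\<in>UNIV. \<Sum>b\<in>Basis. ((M *v c b) $ i)\<^sup>2)"
    by (simp only: power2_norm_vec power2_norm_euclidean[of "mix M u $ _"] comp)
  also have "\<dots> = (\<Sum>b\<in>Basis. (norm (M *v c b))\<^sup>2)"
    by (subst sum.swap) (simp only: power2_norm_vec real_norm_def power2_abs)
  also have "\<dots> \<le> (\<Sum>b\<in>Basis. (L * norm (c b))\<^sup>2)"
    by (intro sum_mono power_mono) (simp_all add: L_def onorm)
  also have "\<dots> = L\<^sup>2 * (\<Sum>b\<in>Basis. \<Sum>r\<in>UNIV. (u $ r \<bullet> b)\<^sup>2)"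
    by (simp only: power_mult_distrib sum_distrib_left power2_norm_vec c_def vec_lambda_beta
        real_norm_def power2_abs)
  also have "\<dots> = L\<^sup>2 * (norm u)\<^sup>2"
    by (subst sum.swap) (simp only: power2_norm_vec power2_norm_euclidean[of "u $ _"])
  finally have "(norm (mix M u))\<^sup>2 \<le> (L * norm u)\<^sup>2"
    by (simp add: power_mult_distrib)
  then have "norm (mix M u) \<le> L * norm u"
    by (rule power2_le_imp_le) (simp add: L_def onorm_pos_le)
  then show ?thesis by (simp only: L_def)
qed

lemma average_const [simp]: "average (\<chi> i. c :: 'a::real_vector^'n) = c"
  by (simp add: average_def sum_constant_scaleR)

lemma deviation_const [simp]: "deviation (\<chi> i. c :: 'a::real_vector^'n) = 0"
  by (simp add: deviation_def)

lemma mix_diff: "mix M (u - w) = mix M u - mix M w"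
  by (simp add: mix_def vec_eq_iff scaleR_diff_right sum_subtractf)

lemma mix_minus_avg_matrix:
  fixes W :: "real^'n^'n"
  shows "mix (W - avg_matrix) u = mix W u - (\<chi> i. average u)"
proof -
  have "mix (W - avg_matrix) u $ i = mix W u $ i - average u" for i
  proof -
    have "mix (W - avg_matrix) u $ i = (\<Sum>r\<in>UNIV. W $ i $ r *\<^sub>R u $ r - (1 / real CARD('n)) *\<^sub>R u $ r)"
      by (simp add: mix_def avg_matrix_def scaleR_diff_left)
    also have "\<dots> = mix W u $ i - average u"
      by (simp only: sum_subtractf mix_def average_def vec_lambda_beta scaleR_sum_right)
    finally show ?thesis .
  qed
  then show ?thesis by (simp add: vec_eq_iff)
qed

lemma average_mix:
  fixes W :: "real^'n^'n"
  assumes "\<And>j. (\<Sum>i\<in>UNIV. W $ i $ j) = 1"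
  shows "average (mix W u) = average u"
proof -
  have "(\<Sum>i\<in>UNIV. mix W u $ i) = (\<Sum>i\<in>UNIV. \<Sum>r\<in>UNIV. W $ i $ r *\<^sub>R u $ r)"
    by (simp add: mix_def)
  also have "\<dots> = (\<Sum>r\<in>UNIV. \<Sum>i\<in>UNIV. W $ i $ r *\<^sub>R u $ r)"
    by (rule sum.swap)
  also have "\<dots> = (\<Sum>r\<in>UNIV. u $ r)"
    by (simp add: scaleR_sum_left[symmetric] assms)
  finally show ?thesis by (simp add: average_def)
qed

lemma deviation_mix:
  fixes W :: "real^'n^'n"
  assumes "\<And>j. (\<Sum>i\<in>UNIV. W $ i $ j) = 1"
  shows "deviation (mix W u) = mix (W - avg_matrix) u"
  by (simp add: deviation_def mix_minus_avg_matrix average_mix[OF assms])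

lemma mix_minus_avg_matrix_const:
  fixes W :: "real^'n^'n" and c :: "'a::real_vector"
  assumes "\<And>i. (\<Sum>j\<in>UNIV. W $ i $ j) = 1"
  shows "mix (W - avg_matrix) (\<chi> i. c) = 0"
proof -
  have "mix W (\<chi> i. c) = (\<chi> i. c)"
    by (simp add: mix_def vec_eq_iff scaleR_sum_left[symmetric] assms)
  then show ?thesis by (simp add: mix_minus_avg_matrix)
qed

lemma sum_norm_le_sqrt_card_mult_norm:
  fixes u :: "'a::real_normed_vector^'n"
  shows "(\<Sum>i\<in>UNIV. norm (u $ i)) \<le> sqrt (real CARD('n)) * norm u"
proof -
  have "(\<Sum>i\<in>UNIV. norm (u $ i))\<^sup>2 \<le> (\<Sum>i\<in>UNIV. (norm (u $ i))\<^sup>2) * real CARD('n)"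
    by (rule sum_squared_le_sum_of_squares)
  then have "(\<Sum>i\<in>UNIV. norm (u $ i))\<^sup>2 \<le> (sqrt (real CARD('n)) * norm u)\<^sup>2"
    by (simp add: power_mult_distrib power2_norm_vec mult.commute)
  then show ?thesis by (rule power2_le_imp_le) simp
qed

lemma mean_norm_le_norm_div_sqrt_card:
  fixes u :: "'a::real_normed_vector^'n"
  shows "(1 / real CARD('n)) * (\<Sum>i\<in>UNIV. norm (u $ i)) \<le> norm u / sqrt (real CARD('n))"
proof -
  have "(1 / real CARD('n)) * (\<Sum>i\<in>UNIV. norm (u $ i))
      \<le> (1 / real CARD('n)) * (sqrt (real CARD('n)) * norm u)"
    by (rule mult_left_mono[OF sum_norm_le_sqrt_card_mult_norm]) simp
  also have "\<dots> = norm u / sqrt (real CARD('n))"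
    by (simp add: field_simps real_sqrt_mult_self flip: real_sqrt_mult)
  finally show ?thesis .
qed

lemma norm_le_sqrt_card_mult:
  fixes u :: "'a::real_normed_vector^'n"
  assumes "\<And>i. norm (u $ i) \<le> c"
  shows "norm u \<le> sqrt (real CARD('n)) * c"
proof -
  have "norm u \<le> L2_set (\<lambda>i. c) (UNIV :: 'n set)"
    unfolding norm_vec_def by (rule L2_set_mono) (simp_all add: assms)
  moreover have "0 \<le> c" using assms order_trans[OF norm_ge_zero] by blast
  ultimately show ?thesis by (simp add: L2_set_constant)
qed

lemma affine_recursion_le_fixpoint:
  fixes a :: "nat \<Rightarrow> real"
  assumes "0 \<le> q" "q < 1" "a 0 \<le> c / (1 - q)"
    and "\<And>t. t < T \<Longrightarrow> a (Suc t) \<le> q * a t + c"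
  shows "t \<le> T \<Longrightarrow> a t \<le> c / (1 - q)"
proof (induction t)
  case 0
  show ?case by (fact assms(3))
next
  case (Suc t)
  have "a (Suc t) \<le> q * a t + c"
    using assms(4) Suc.prems by simp
  also have "\<dots> \<le> q * (c / (1 - q)) + c"
    using Suc assms(1) by (intro add_right_mono mult_left_mono) simp_all
  also have "\<dots> = c / (1 - q)"
    using assms(2) by (simp add: field_simps)
  finally show ?case .
qed

lemma norm_deviation_le:
  fixes W :: "real^'n^'n" and X D :: "nat \<Rightarrow> 'a::euclidean_space^'n"
  assumes rows: "\<And>i. (\<Sum>j\<in>UNIV. W $ i $ j) = 1"
    and cols: "\<And>j. (\<Sum>i\<in>UNIV. W $ i $ j) = 1"
    and rate: "mixing_rate W < 1" and alpha: "0 \<le> \<alpha>"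
    and X0: "deviation (X 0) = 0"
    and D: "\<And>t i. t < T \<Longrightarrow> norm (D t $ i) \<le> 1"
    and X_step: "\<And>t. t < T \<Longrightarrow> X (Suc t) = mix W (X t - \<alpha> *\<^sub>R D t)"
    and "t \<le> T"
  shows "norm (deviation (X t)) \<le> \<alpha> * mixing_rate W * sqrt (real CARD('n)) / (1 - mixing_rate W)"
proof -
  define M where "M = W - avg_matrix"
  define lam where "lam = mixing_rate W"
  have lam_onorm: "lam = onorm (\<lambda>z. M *v z)"
    unfolding lam_def mixing_rate_def M_def ..
  have lam_nonneg: "0 \<le> lam"
    unfolding lam_onorm by (rule onorm_pos_le) simp
  have deviation_step: "deviation (X (Suc t)) = mix M (deviation (X t) - \<alpha> *\<^sub>R D t)"
    if "t < T" for t
  proof -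
    have "deviation (X (Suc t)) = mix M (X t - \<alpha> *\<^sub>R D t)"
      unfolding X_step[OF that] M_def by (rule deviation_mix[OF cols])
    also have "\<dots> = mix M ((X t - \<alpha> *\<^sub>R D t) - (\<chi> i. average (X t)))"
      unfolding mix_diff M_def mix_minus_avg_matrix_const[OF rows] by simp
    also have "(X t - \<alpha> *\<^sub>R D t) - (\<chi> i. average (X t)) = deviation (X t) - \<alpha> *\<^sub>R D t"
      by (simp add: deviation_def)
    finally show ?thesis .
  qed
  have contraction:
    "norm (deviation (X (Suc t))) \<le> lam * norm (deviation (X t)) + \<alpha> * lam * sqrt (real CARD('n))"
    if "t < T" for t
  proof -
    have "norm (deviation (X (Suc t))) \<le> lam * norm (deviation (X t) - \<alpha> *\<^sub>R D t)"
      unfolding deviation_step[OF that] lam_onorm by (rule norm_mix_le)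
    also have "\<dots> \<le> lam * (norm (deviation (X t)) + \<alpha> * norm (D t))"
      using norm_triangle_ineq4[of "deviation (X t)" "\<alpha> *\<^sub>R D t"] alpha lam_nonneg
      by (intro mult_left_mono) simp_all
    also have "\<dots> \<le> lam * (norm (deviation (X t)) + \<alpha> * sqrt (real CARD('n)))"
      using norm_le_sqrt_card_mult[of "D t" 1] D[OF that] alpha lam_nonneg
      by (intro mult_left_mono add_left_mono) simp_all
    finally show ?thesis by (simp add: algebra_simps)
  qed
  have lam_lt_1: "lam < 1"
    using rate by (simp add: lam_def)
  have start: "norm (deviation (X 0)) \<le> \<alpha> * lam * sqrt (real CARD('n)) / (1 - lam)"
    using X0 alpha lam_nonneg lam_lt_1 by simp
  have "norm (deviation (X t)) \<le> \<alpha> * lam * sqrt (real CARD('n)) / (1 - lam)"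
    by (rule affine_recursion_le_fixpoint[where a = "\<lambda>t. norm (deviation (X t))",
          OF lam_nonneg lam_lt_1 start contraction \<open>t \<le> T\<close>])
  then show ?thesis by (simp add: lam_def)
qed

theorem lemma4:
  fixes W :: "real^'n^'n"
    and g :: "'n \<Rightarrow> real^'d \<Rightarrow> 'xi \<Rightarrow> real^'d"
    and \<xi> :: "nat \<Rightarrow> 'n \<Rightarrow> 'xi"
    and x v y :: "nat \<Rightarrow> 'n \<Rightarrow> real^'d"
    and x0 :: "real^'d"
    and \<alpha> \<beta> :: real and T :: nat
  assumes nonneg: "nonneg_matrix W"
    and prim: "primitive_matrix W"
    and ds: "doubly_stochastic W"
    and lam: "mixing_rate W < 1"
    and alpha: "\<alpha> > 0"
    and beta: "0 \<le> \<beta>" "\<beta> < 1"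
    and x_init: "\<And>i. x 0 i = x0"
    and v_init: "\<And>i. v 0 i = (1 - \<beta>) *\<^sub>R g i (x 0 i) (\<xi> 0 i)"
    and v_step: "\<And>t i. Suc t < T \<Longrightarrow>
        v (Suc t) i = \<beta> *\<^sub>R v t i + (1 - \<beta>) *\<^sub>R g i (x (Suc t) i) (\<xi> (Suc t) i)"
    and y_init: "\<And>i. y 0 i = (\<Sum>r\<in>UNIV. W $ i $ r *\<^sub>R v 0 r)"
    and y_step: "\<And>t i. Suc t < T \<Longrightarrow>
        y (Suc t) i = (\<Sum>r\<in>UNIV. W $ i $ r *\<^sub>R (y t r + v (Suc t) r - v t r))"
    and x_step: "\<And>t i. t < T \<Longrightarrow>
        x (Suc t) i = (\<Sum>r\<in>UNIV. W $ i $ r *\<^sub>R (x t r - \<alpha> *\<^sub>R normalize (y t r)))"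
  shows "\<forall>t \<le> T.
     (1 / real CARD('n)) * (\<Sum>i\<in>UNIV. norm (x t i - (1 / real CARD('n)) *\<^sub>R (\<Sum>j\<in>UNIV. x t j)))
       \<le> \<alpha> * mixing_rate W / (1 - mixing_rate W)"
proof (intro allI impI)
  fix t assume "t \<le> T"
  define n where "n = real CARD('n)"
  define X where "X t = (\<chi> i. x t i)" for t
  define D where "D t = (\<chi> i. normalize (y t i))" for t
  have rows: "\<And>i. (\<Sum>j\<in>UNIV. W $ i $ j) = 1" and cols: "\<And>j. (\<Sum>i\<in>UNIV. W $ i $ j) = 1"
    using ds by (simp_all add: doubly_stochastic_def)
  have X0: "deviation (X 0) = 0"
    by (simp add: X_def x_init)
  have D: "norm (D t $ i) \<le> 1" for t i
    by (simp add: D_def normalize_def)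
  have X_step: "X (Suc t) = mix W (X t - \<alpha> *\<^sub>R D t)" if "t < T" for t
    by (simp add: X_def D_def mix_def vec_eq_iff x_step[OF that])
  have bound: "norm (deviation (X t)) \<le> \<alpha> * mixing_rate W * sqrt n / (1 - mixing_rate W)"
    unfolding n_def
    by (rule norm_deviation_le[where X = X and D = D,
          OF rows cols lam less_imp_le[OF alpha] X0 D X_step \<open>t \<le> T\<close>])
  have "(1 / n) * (\<Sum>i\<in>UNIV. norm (x t i - (1 / n) *\<^sub>R (\<Sum>j\<in>UNIV. x t j)))
      \<le> norm (deviation (X t)) / sqrt n"
    using mean_norm_le_norm_div_sqrt_card[of "deviation (X t)"]
    by (simp add: n_def X_def deviation_def average_def)
  also have "\<dots> \<le> (\<alpha> * mixing_rate W * sqrt n / (1 - mixing_rate W)) / sqrt n"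
    by (rule divide_right_mono[OF bound]) (simp add: n_def)
  also have "\<dots> = \<alpha> * mixing_rate W / (1 - mixing_rate W)"
    by (simp add: n_def)
  finally show "(1 / real CARD('n)) * (\<Sum>i\<in>UNIV. norm (x t i - (1 / real CARD('n)) *\<^sub>R (\<Sum>j\<in>UNIV. x t j)))
       \<le> \<alpha> * mixing_rate W / (1 - mixing_rate W)"
    unfolding n_def .
qed

end
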